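(* Let $R$ be a commutative ring with $1\neq 0$, $S\subseteq R$ a multiplicatively closed subset, and $M$ an $S$-comultiplication $R$-module. If $N$ is an $S$-copure submodule of $M$, then for every $s\in S$ the module $M/sN$ is an $S$-comultiplication $R$-module.
   Context: All rings are commutative with $1\neq 0$ and all modules are unital. A multiplicatively closed subset (m.c.s.) $S$ of $R$ is a subset with $0\notin S$, $1\in S$, and $ss'\in S$ for all $s,s'\in S$. For an ideal $I$ and submodule $L$, $(L:_M I)=\{m\in M: Im\subseteq L\}$ and $(0:_M I)=\{m\in M: Im=0\}$. $M$ is an $S$-comultiplication module if for each submodule $N$ of $M$ there exist $s\in S$ and an ideal $I$ of $R$ with $s(0:_M I)\subseteq N\subseteq (0:_M I)$. A submodule $L$ of $M$ is $S$-copure if there exists $s\in S$ such that $s(L:_M I)\subseteq L+(0:_M I)$ for every ideal $I$ of $R$. *)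

theory Defs
  imports "HOL-Algebra.Module" "HOL-Algebra.Ideal" "HOL-Algebra.AbelCoset"
begin

definition mcs :: "('a, 'c) ring_scheme \<Rightarrow> 'a set \<Rightarrow> bool" where
  "mcs R S \<longleftrightarrow> S \<subseteq> carrier R \<and> \<zero>\<^bsub>R\<^esub> \<notin> S \<and> \<one>\<^bsub>R\<^esub> \<in> S \<and>
     (\<forall>s\<in>S. \<forall>t\<in>S. s \<otimes>\<^bsub>R\<^esub> t \<in> S)"

definition smult_set :: "('a, 'b, 'c) module_scheme \<Rightarrow> 'a \<Rightarrow> 'b set \<Rightarrow> 'b set" where
  "smult_set M r X = (\<lambda>x. r \<odot>\<^bsub>M\<^esub> x) ` X"

definition colon :: "('a, 'b, 'c) module_scheme \<Rightarrow> 'b set \<Rightarrow> 'a set \<Rightarrow> 'b set" where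
  "colon M L I = {m \<in> carrier M. \<forall>a\<in>I. a \<odot>\<^bsub>M\<^esub> m \<in> L}"

definition ann :: "('a, 'b, 'c) module_scheme \<Rightarrow> 'a set \<Rightarrow> 'b set" where
  "ann M I = colon M {\<zero>\<^bsub>M\<^esub>} I"

definition S_comultiplication ::
  "('a, 'd) ring_scheme \<Rightarrow> 'a set \<Rightarrow> ('a, 'b, 'c) module_scheme \<Rightarrow> bool" where
  "S_comultiplication R S M \<longleftrightarrow>
     (\<forall>N. submodule N R M \<longrightarrow>
        (\<exists>s\<in>S. \<exists>I. ideal I R \<and> smult_set M s (ann M I) \<subseteq> N \<and> N \<subseteq> ann M I))"

definition S_copure ::
  "('a, 'd) ring_scheme \<Rightarrow> 'a set \<Rightarrow> ('a, 'b, 'c) module_scheme \<Rightarrow> 'b set \<Rightarrow> bool" where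
  "S_copure R S M L \<longleftrightarrow> submodule L R M \<and>
     (\<exists>s\<in>S. \<forall>I. ideal I R \<longrightarrow> smult_set M s (colon M L I) \<subseteq> L <+>\<^bsub>M\<^esub> ann M I)"

text \<open>Quotient module M/K: carrier is the set of cosets K + m, addition is
  set addition, zero is K, scalar action r (K + m) = K + r m.  The ring fields
  mult/one of the record are irrelevant for modules and set to undefined.\<close>
definition quot_module :: "('a, 'b, 'c) module_scheme \<Rightarrow> 'b set \<Rightarrow> ('a, 'b set) module" where
  "quot_module M K =
     \<lparr>carrier = a_rcosets\<^bsub>M\<^esub> K, monoid.mult = undefined, one = undefined,
      zero = K, add = (\<lambda>X Y. X <+>\<^bsub>M\<^esub> Y),
      smult = (\<lambda>r X. K <+>\<^bsub>M\<^esub> smult_set M r X)\<rparr>"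

end

theory Submission
  imports Defs
begin

text \<open>The preimage in \<open>M\<close> of a submodule of \<open>M/K\<close> is a submodule \<open>L \<supseteq> K\<close>, so
  \<open>S\<close>-comultiplication of \<open>M\<close> gives \<open>t \<in> S\<close> and an ideal \<open>I\<close> with
  \<open>t (0 :\<^sub>M I) \<subseteq> L \<subseteq> (0 :\<^sub>M I)\<close>. The second inclusion passes to \<open>M/K\<close> directly.
  For the first, a coset \<open>K + x\<close> killed by \<open>I\<close> has \<open>x \<in> (K :\<^sub>M I)\<close>; if \<open>K\<close> is
  \<open>S\<close>-copure with witness \<open>w\<close>, then \<open>w x = k + z\<close> with \<open>k \<in> K\<close>, \<open>z \<in> (0 :\<^sub>M I)\<close>,
  hence \<open>t w x \<in> L\<close>. So \<open>M/K\<close> is \<open>S\<close>-comultiplication whenever \<open>K\<close> is \<open>S\<close>-copure,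
  and \<open>sN\<close> is \<open>S\<close>-copure whenever \<open>N\<close> is: from \<open>(sN :\<^sub>M I) \<subseteq> (N :\<^sub>M I)\<close> and
  \<open>u x = n + z\<close> one gets \<open>s u x = s n + s z \<in> sN + (0 :\<^sub>M I)\<close>.\<close>

context module
begin

lemma submodule_zero_closed: "submodule K R M \<Longrightarrow> \<zero>\<^bsub>M\<^esub> \<in> K"
  using submodule.axioms(1) subgroup.one_closed by fastforce

lemma submodule_abelian_subgroup:
  assumes "submodule K R M" shows "abelian_subgroup K M"
  by (rule abelian_subgroupI3[OF additive_subgroupI[OF submodule.axioms(1)[OF assms]]])
    unfold_locales

lemma quot_module_carrier: "carrier (quot_module M K) = {K +>\<^bsub>M\<^esub> x | x. x \<in> carrier M}"
  unfolding quot_module_def A_RCOSETS_def' by auto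

lemma quot_module_zero: "\<zero>\<^bsub>quot_module M K\<^esub> = K"
  unfolding quot_module_def by simp

lemma a_rcos_eq_submodule_iff:
  assumes "submodule K R M" "x \<in> carrier M"
  shows "K +>\<^bsub>M\<^esub> x = K \<longleftrightarrow> x \<in> K"
proof -
  interpret K: abelian_subgroup K M by (rule submodule_abelian_subgroup[OF assms(1)])
  show ?thesis using K.a_rcos_const K.a_rcos_self assms(2) by metis
qed

lemma quot_module_zero_eq_a_rcos:
  "submodule K R M \<Longrightarrow> \<zero>\<^bsub>quot_module M K\<^esub> = K +>\<^bsub>M\<^esub> \<zero>\<^bsub>M\<^esub>"
  using a_rcos_eq_submodule_iff submodule_zero_closed quot_module_zero by (metis zero_closed)

lemma quot_module_add:
  assumes "submodule K R M" "x \<in> carrier M" "y \<in> carrier M"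
  shows "(K +>\<^bsub>M\<^esub> x) \<oplus>\<^bsub>quot_module M K\<^esub> (K +>\<^bsub>M\<^esub> y) = K +>\<^bsub>M\<^esub> (x \<oplus>\<^bsub>M\<^esub> y)"
proof -
  interpret K: abelian_subgroup K M by (rule submodule_abelian_subgroup[OF assms(1)])
  show ?thesis unfolding quot_module_def using K.a_rcos_sum assms(2,3) by simp
qed

lemma quot_module_smult:
  assumes K: "submodule K R M" and r: "r \<in> carrier R" and x: "x \<in> carrier M"
  shows "r \<odot>\<^bsub>quot_module M K\<^esub> (K +>\<^bsub>M\<^esub> x) = K +>\<^bsub>M\<^esub> (r \<odot>\<^bsub>M\<^esub> x)"
proof -
  have "K <+>\<^bsub>M\<^esub> smult_set M r (K +>\<^bsub>M\<^esub> x) = K +>\<^bsub>M\<^esub> (r \<odot>\<^bsub>M\<^esub> x)"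
  proof (intro equalityI subsetI)
    fix z assume "z \<in> K <+>\<^bsub>M\<^esub> smult_set M r (K +>\<^bsub>M\<^esub> x)"
    then obtain k h where k: "k \<in> K" and h: "h \<in> K"
      and z: "z = k \<oplus>\<^bsub>M\<^esub> (r \<odot>\<^bsub>M\<^esub> (h \<oplus>\<^bsub>M\<^esub> x))"
      unfolding set_add_def' a_r_coset_def' smult_set_def by auto
    have "k \<in> carrier M" "h \<in> carrier M" using k h submoduleE(1)[OF K] by auto
    then have "z = (k \<oplus>\<^bsub>M\<^esub> r \<odot>\<^bsub>M\<^esub> h) \<oplus>\<^bsub>M\<^esub> r \<odot>\<^bsub>M\<^esub> x"
      using z r x smult_r_distr M.add.m_assoc by simp
    moreover have "k \<oplus>\<^bsub>M\<^esub> r \<odot>\<^bsub>M\<^esub> h \<in> K"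
      using submoduleE(4,5)[OF K] k h r by simp
    ultimately show "z \<in> K +>\<^bsub>M\<^esub> (r \<odot>\<^bsub>M\<^esub> x)" unfolding a_r_coset_def' by auto
  next
    fix z assume "z \<in> K +>\<^bsub>M\<^esub> (r \<odot>\<^bsub>M\<^esub> x)"
    then obtain k where k: "k \<in> K" and z: "z = k \<oplus>\<^bsub>M\<^esub> (r \<odot>\<^bsub>M\<^esub> x)"
      unfolding a_r_coset_def' by auto
    have "r \<odot>\<^bsub>M\<^esub> x \<in> smult_set M r (K +>\<^bsub>M\<^esub> x)"
      using submodule_zero_closed[OF K] x
      unfolding smult_set_def a_r_coset_def' by (force intro: image_eqI[of _ _ "\<zero>\<^bsub>M\<^esub> \<oplus>\<^bsub>M\<^esub> x"])
    then show "z \<in> K <+>\<^bsub>M\<^esub> smult_set M r (K +>\<^bsub>M\<^esub> x)"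
      unfolding set_add_def' using k z by auto
  qed
  then show ?thesis unfolding quot_module_def by simp
qed

lemma quot_module_carrierE:
  assumes "X \<in> carrier (quot_module M K)"
  obtains x where "x \<in> carrier M" "X = K +>\<^bsub>M\<^esub> x"
  using assms quot_module_carrier by auto

lemma a_rcos_in_quot_module_carrier:
  "x \<in> carrier M \<Longrightarrow> K +>\<^bsub>M\<^esub> x \<in> carrier (quot_module M K)"
  using quot_module_carrier by auto

lemma quot_module_abelian_group:
  assumes K: "submodule K R M"
  shows "abelian_group (quot_module M K)"
proof (rule abelian_groupI)
  fix X Y assume "X \<in> carrier (quot_module M K)" "Y \<in> carrier (quot_module M K)"
  then obtain x y where "x \<in> carrier M" "y \<in> carrier M" "X = K +>\<^bsub>M\<^esub> x" "Y = K +>\<^bsub>M\<^esub> y"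
    by (metis quot_module_carrierE)
  then show "X \<oplus>\<^bsub>quot_module M K\<^esub> Y \<in> carrier (quot_module M K)"
    and "X \<oplus>\<^bsub>quot_module M K\<^esub> Y = Y \<oplus>\<^bsub>quot_module M K\<^esub> X"
    using quot_module_add[OF K] a_rcos_in_quot_module_carrier M.add.m_comm by auto
next
  show "\<zero>\<^bsub>quot_module M K\<^esub> \<in> carrier (quot_module M K)"
    using quot_module_zero_eq_a_rcos[OF K] a_rcos_in_quot_module_carrier by simp
next
  fix X Y Z assume "X \<in> carrier (quot_module M K)" "Y \<in> carrier (quot_module M K)"
    "Z \<in> carrier (quot_module M K)"
  then obtain x y z where "x \<in> carrier M" "y \<in> carrier M" "z \<in> carrier M"
    "X = K +>\<^bsub>M\<^esub> x" "Y = K +>\<^bsub>M\<^esub> y" "Z = K +>\<^bsub>M\<^esub> z"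
    by (metis quot_module_carrierE)
  then show "X \<oplus>\<^bsub>quot_module M K\<^esub> Y \<oplus>\<^bsub>quot_module M K\<^esub> Z =
      X \<oplus>\<^bsub>quot_module M K\<^esub> (Y \<oplus>\<^bsub>quot_module M K\<^esub> Z)"
    using quot_module_add[OF K] M.add.m_assoc by simp
next
  fix X assume "X \<in> carrier (quot_module M K)"
  then obtain x where x: "x \<in> carrier M" "X = K +>\<^bsub>M\<^esub> x" by (rule quot_module_carrierE)
  note zero = quot_module_zero_eq_a_rcos[OF K]
  show "\<zero>\<^bsub>quot_module M K\<^esub> \<oplus>\<^bsub>quot_module M K\<^esub> X = X"
    using quot_module_add[OF K] zero x by simp
  have "(K +>\<^bsub>M\<^esub> \<ominus>\<^bsub>M\<^esub> x) \<oplus>\<^bsub>quot_module M K\<^esub> X = \<zero>\<^bsub>quot_module M K\<^esub>"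
    using quot_module_add[OF K] zero x M.l_neg by simp
  then show "\<exists>Y\<in>carrier (quot_module M K). Y \<oplus>\<^bsub>quot_module M K\<^esub> X = \<zero>\<^bsub>quot_module M K\<^esub>"
    using a_rcos_in_quot_module_carrier x by blast
qed

lemma quot_module_is_module:
  assumes K: "submodule K R M"
  shows "module R (quot_module M K)"
proof (rule moduleI)
  show "cring R" by unfold_locales
  show "abelian_group (quot_module M K)" by (rule quot_module_abelian_group[OF K])
next
  fix a X assume a: "a \<in> carrier R" and "X \<in> carrier (quot_module M K)"
  then obtain x where x: "x \<in> carrier M" "X = K +>\<^bsub>M\<^esub> x" by (metis quot_module_carrierE)
  show "a \<odot>\<^bsub>quot_module M K\<^esub> X \<in> carrier (quot_module M K)"
    using x quot_module_smult[OF K a] a a_rcos_in_quot_module_carrier by simp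
next
  fix a b X assume a: "a \<in> carrier R" and b: "b \<in> carrier R" and "X \<in> carrier (quot_module M K)"
  then obtain x where x: "x \<in> carrier M" "X = K +>\<^bsub>M\<^esub> x" by (metis quot_module_carrierE)
  show "(a \<oplus>\<^bsub>R\<^esub> b) \<odot>\<^bsub>quot_module M K\<^esub> X =
      a \<odot>\<^bsub>quot_module M K\<^esub> X \<oplus>\<^bsub>quot_module M K\<^esub> b \<odot>\<^bsub>quot_module M K\<^esub> X"
    using x a b quot_module_smult[OF K] quot_module_add[OF K] smult_l_distr by simp
  show "(a \<otimes>\<^bsub>R\<^esub> b) \<odot>\<^bsub>quot_module M K\<^esub> X = a \<odot>\<^bsub>quot_module M K\<^esub> (b \<odot>\<^bsub>quot_module M K\<^esub> X)"
    using x a b quot_module_smult[OF K] smult_assoc1 by simp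
next
  fix a X Y assume a: "a \<in> carrier R"
    and "X \<in> carrier (quot_module M K)" "Y \<in> carrier (quot_module M K)"
  then obtain x y where "x \<in> carrier M" "X = K +>\<^bsub>M\<^esub> x" "y \<in> carrier M" "Y = K +>\<^bsub>M\<^esub> y"
    by (metis quot_module_carrierE)
  then show "a \<odot>\<^bsub>quot_module M K\<^esub> (X \<oplus>\<^bsub>quot_module M K\<^esub> Y) =
      a \<odot>\<^bsub>quot_module M K\<^esub> X \<oplus>\<^bsub>quot_module M K\<^esub> a \<odot>\<^bsub>quot_module M K\<^esub> Y"
    using a quot_module_smult[OF K] quot_module_add[OF K] smult_r_distr by simp
next
  fix X assume "X \<in> carrier (quot_module M K)"
  then obtain x where "x \<in> carrier M" "X = K +>\<^bsub>M\<^esub> x" by (rule quot_module_carrierE)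
  then show "\<one>\<^bsub>R\<^esub> \<odot>\<^bsub>quot_module M K\<^esub> X = X"
    using quot_module_smult[OF K] by simp
qed

lemma submodule_smult_set:
  assumes N: "submodule N R M" and s: "s \<in> carrier R"
  shows "submodule (smult_set M s N) R M"
proof (rule submoduleI)
  have Nc: "N \<subseteq> carrier M" by (rule submoduleE(1)[OF N])
  show "smult_set M s N \<subseteq> carrier M" using Nc s unfolding smult_set_def by auto
  show "\<zero>\<^bsub>M\<^esub> \<in> smult_set M s N"
    using submodule_zero_closed[OF N] s unfolding smult_set_def
    by (auto intro!: image_eqI[of _ _ "\<zero>\<^bsub>M\<^esub>"])
next
  fix a assume "a \<in> smult_set M s N"
  then obtain n where n: "n \<in> N" "a = s \<odot>\<^bsub>M\<^esub> n" unfolding smult_set_def by auto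
  then have "\<ominus>\<^bsub>M\<^esub> a = s \<odot>\<^bsub>M\<^esub> (\<ominus>\<^bsub>M\<^esub> n)"
    using submoduleE(1)[OF N] s by (simp add: smult_r_minus subsetD)
  then show "\<ominus>\<^bsub>M\<^esub> a \<in> smult_set M s N"
    unfolding smult_set_def using submoduleE(3)[OF N] n(1) by auto
next
  fix a b assume "a \<in> smult_set M s N" "b \<in> smult_set M s N"
  then obtain n m where "n \<in> N" "a = s \<odot>\<^bsub>M\<^esub> n" "m \<in> N" "b = s \<odot>\<^bsub>M\<^esub> m"
    unfolding smult_set_def by auto
  moreover from this have "a \<oplus>\<^bsub>M\<^esub> b = s \<odot>\<^bsub>M\<^esub> (n \<oplus>\<^bsub>M\<^esub> m)"
    using submoduleE(1)[OF N] s by (simp add: smult_r_distr subsetD)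
  ultimately show "a \<oplus>\<^bsub>M\<^esub> b \<in> smult_set M s N"
    unfolding smult_set_def using submoduleE(5)[OF N] by auto
next
  fix a x assume a: "a \<in> carrier R" and "x \<in> smult_set M s N"
  then obtain n where n: "n \<in> N" "x = s \<odot>\<^bsub>M\<^esub> n" unfolding smult_set_def by auto
  have "n \<in> carrier M" using n submoduleE(1)[OF N] by auto
  then have "a \<odot>\<^bsub>M\<^esub> x = s \<odot>\<^bsub>M\<^esub> (a \<odot>\<^bsub>M\<^esub> n)"
    using n a s smult_assoc1 m_comm by metis
  then show "a \<odot>\<^bsub>M\<^esub> x \<in> smult_set M s N"
    unfolding smult_set_def using submoduleE(4)[OF N a n(1)] by auto
qed

lemma ann_smult_closed:
  assumes I: "I \<subseteq> carrier R" and r: "r \<in> carrier R" and z: "z \<in> ann M I"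
  shows "r \<odot>\<^bsub>M\<^esub> z \<in> ann M I"
proof -
  have zc: "z \<in> carrier M" and kill: "\<And>a. a \<in> I \<Longrightarrow> a \<odot>\<^bsub>M\<^esub> z = \<zero>\<^bsub>M\<^esub>"
    using z unfolding ann_def colon_def by auto
  have "a \<odot>\<^bsub>M\<^esub> (r \<odot>\<^bsub>M\<^esub> z) = \<zero>\<^bsub>M\<^esub>" if a: "a \<in> I" for a
  proof -
    have "a \<odot>\<^bsub>M\<^esub> (r \<odot>\<^bsub>M\<^esub> z) = r \<odot>\<^bsub>M\<^esub> (a \<odot>\<^bsub>M\<^esub> z)"
      using a I r zc smult_assoc1 m_comm by (metis subsetD)
    then show ?thesis using kill[OF a] r by simp
  qed
  then show ?thesis using r zc unfolding ann_def colon_def by auto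
qed

lemma ann_quot_module_iff:
  assumes K: "submodule K R M" and I: "I \<subseteq> carrier R" and x: "x \<in> carrier M"
  shows "K +>\<^bsub>M\<^esub> x \<in> ann (quot_module M K) I \<longleftrightarrow> x \<in> colon M K I"
proof -
  have "a \<odot>\<^bsub>quot_module M K\<^esub> (K +>\<^bsub>M\<^esub> x) = \<zero>\<^bsub>quot_module M K\<^esub> \<longleftrightarrow> a \<odot>\<^bsub>M\<^esub> x \<in> K"
    if "a \<in> I" for a
    using that I x quot_module_smult[OF K] a_rcos_eq_submodule_iff[OF K] quot_module_zero
    by (simp add: subsetD)
  then show ?thesis
    using x a_rcos_in_quot_module_carrier unfolding ann_def colon_def by auto
qed

lemma submodule_quot_preimage:
  assumes K: "submodule K R M" and LL: "submodule LL R (quot_module M K)"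
  shows "submodule {m \<in> carrier M. K +>\<^bsub>M\<^esub> m \<in> LL} R M"
proof -
  interpret Q: module R "quot_module M K" by (rule quot_module_is_module[OF K])
  have image_smult: "K +>\<^bsub>M\<^esub> (r \<odot>\<^bsub>M\<^esub> m) \<in> LL"
    if "r \<in> carrier R" "m \<in> carrier M" "K +>\<^bsub>M\<^esub> m \<in> LL" for r m
    using Q.submoduleE(4)[OF LL] quot_module_smult[OF K] that by metis
  show ?thesis
  proof (rule submoduleI)
    fix m assume "m \<in> {m \<in> carrier M. K +>\<^bsub>M\<^esub> m \<in> LL}"
    then show "\<ominus>\<^bsub>M\<^esub> m \<in> {m \<in> carrier M. K +>\<^bsub>M\<^esub> m \<in> LL}"
      using image_smult[of "\<ominus>\<^bsub>R\<^esub> \<one>\<^bsub>R\<^esub>" m] smult_l_minus[of "\<one>\<^bsub>R\<^esub>" m] by simp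
  next
    fix m n assume "m \<in> {m \<in> carrier M. K +>\<^bsub>M\<^esub> m \<in> LL}"
      "n \<in> {m \<in> carrier M. K +>\<^bsub>M\<^esub> m \<in> LL}"
    then show "m \<oplus>\<^bsub>M\<^esub> n \<in> {m \<in> carrier M. K +>\<^bsub>M\<^esub> m \<in> LL}"
      using Q.submoduleE(5)[OF LL] quot_module_add[OF K] by fastforce
  next
    obtain X where "X \<in> LL" using Q.submoduleE(2)[OF LL] by auto
    moreover from this obtain m where "m \<in> carrier M" "X = K +>\<^bsub>M\<^esub> m"
      using Q.submoduleE(1)[OF LL] quot_module_carrierE by blast
    ultimately show "\<zero>\<^bsub>M\<^esub> \<in> {m \<in> carrier M. K +>\<^bsub>M\<^esub> m \<in> LL}"
      using image_smult[of "\<zero>\<^bsub>R\<^esub>" m] by simp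
  qed (use image_smult in auto)
qed

lemma S_copure_smult_set:
  assumes S: "mcs R S" and N: "S_copure R S M N" and s: "s \<in> S"
  shows "S_copure R S M (smult_set M s N)"
proof -
  obtain u where NS: "submodule N R M" and u: "u \<in> S"
    and copure: "\<And>I. ideal I R \<Longrightarrow> smult_set M u (colon M N I) \<subseteq> N <+>\<^bsub>M\<^esub> ann M I"
    using N unfolding S_copure_def by blast
  have sR: "s \<in> carrier R" and uR: "u \<in> carrier R" and su: "s \<otimes>\<^bsub>R\<^esub> u \<in> S"
    using S s u unfolding mcs_def by auto
  have sN_N: "smult_set M s N \<subseteq> N"
    unfolding smult_set_def using submoduleE(4)[OF NS sR] by auto
  have "smult_set M (s \<otimes>\<^bsub>R\<^esub> u) (colon M (smult_set M s N) I)
          \<subseteq> smult_set M s N <+>\<^bsub>M\<^esub> ann M I" if I: "ideal I R" for I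
  proof
    fix y assume "y \<in> smult_set M (s \<otimes>\<^bsub>R\<^esub> u) (colon M (smult_set M s N) I)"
    then obtain x where x: "x \<in> colon M (smult_set M s N) I" and y: "y = (s \<otimes>\<^bsub>R\<^esub> u) \<odot>\<^bsub>M\<^esub> x"
      unfolding smult_set_def by auto
    have xc: "x \<in> carrier M" using x unfolding colon_def by auto
    have "x \<in> colon M N I" using x sN_N unfolding colon_def by auto
    then have "u \<odot>\<^bsub>M\<^esub> x \<in> N <+>\<^bsub>M\<^esub> ann M I" using copure[OF I] unfolding smult_set_def by auto
    then obtain n z where n: "n \<in> N" and z: "z \<in> ann M I" and ux: "u \<odot>\<^bsub>M\<^esub> x = n \<oplus>\<^bsub>M\<^esub> z"
      unfolding set_add_def' by auto
    have "n \<in> carrier M" "z \<in> carrier M"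
      using n z submoduleE(1)[OF NS] unfolding ann_def colon_def by auto
    then have "y = s \<odot>\<^bsub>M\<^esub> n \<oplus>\<^bsub>M\<^esub> s \<odot>\<^bsub>M\<^esub> z"
      using y ux sR uR xc smult_assoc1 smult_r_distr by simp
    moreover have "s \<odot>\<^bsub>M\<^esub> z \<in> ann M I"
      using ann_smult_closed[OF _ sR z] ideal.Icarr[OF I] by blast
    ultimately show "y \<in> smult_set M s N <+>\<^bsub>M\<^esub> ann M I"
      using n unfolding smult_set_def set_add_def' by auto
  qed
  then show ?thesis
    unfolding S_copure_def using submodule_smult_set[OF NS sR] su by blast
qed

lemma smult_colon_in_submodule:
  assumes L: "submodule L R M" and KL: "K \<subseteq> L" and I: "ideal I R"
    and t: "t \<in> carrier R" "smult_set M t (ann M I) \<subseteq> L"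
    and w: "w \<in> carrier R" "smult_set M w (colon M K I) \<subseteq> K <+>\<^bsub>M\<^esub> ann M I"
    and x: "x \<in> colon M K I"
  shows "(t \<otimes>\<^bsub>R\<^esub> w) \<odot>\<^bsub>M\<^esub> x \<in> L"
proof -
  have "w \<odot>\<^bsub>M\<^esub> x \<in> K <+>\<^bsub>M\<^esub> ann M I" using w(2) x unfolding smult_set_def by auto
  then obtain k z where k: "k \<in> K" and z: "z \<in> ann M I" and wx: "w \<odot>\<^bsub>M\<^esub> x = k \<oplus>\<^bsub>M\<^esub> z"
    unfolding set_add_def' by auto
  have "k \<in> carrier M" "z \<in> carrier M" "x \<in> carrier M"
    using k z x KL submoduleE(1)[OF L] unfolding ann_def colon_def by auto
  then have "(t \<otimes>\<^bsub>R\<^esub> w) \<odot>\<^bsub>M\<^esub> x = t \<odot>\<^bsub>M\<^esub> k \<oplus>\<^bsub>M\<^esub> t \<odot>\<^bsub>M\<^esub> z"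
    using wx t(1) w(1) smult_assoc1 smult_r_distr by simp
  moreover have "t \<odot>\<^bsub>M\<^esub> k \<in> L" using submoduleE(4)[OF L t(1)] k KL by blast
  moreover have "t \<odot>\<^bsub>M\<^esub> z \<in> L" using t(2) z unfolding smult_set_def by blast
  ultimately show ?thesis using submoduleE(5)[OF L] by simp
qed

lemma S_comultiplication_quot_module:
  assumes S: "mcs R S" and M: "S_comultiplication R S M" and K: "S_copure R S M K"
  shows "S_comultiplication R S (quot_module M K)"
  unfolding S_comultiplication_def
proof (intro allI impI)
  fix LL assume LL: "submodule LL R (quot_module M K)"
  obtain w where KS: "submodule K R M" and w: "w \<in> S"
    and copure: "\<And>I. ideal I R \<Longrightarrow> smult_set M w (colon M K I) \<subseteq> K <+>\<^bsub>M\<^esub> ann M I"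
    using K unfolding S_copure_def by blast
  interpret Q: module R "quot_module M K" by (rule quot_module_is_module[OF KS])
  define L where "L = {m \<in> carrier M. K +>\<^bsub>M\<^esub> m \<in> LL}"
  have LS: "submodule L R M" unfolding L_def by (rule submodule_quot_preimage[OF KS LL])
  have KL: "K \<subseteq> L"
  proof
    fix k assume k: "k \<in> K"
    then have "k \<in> carrier M" "K +>\<^bsub>M\<^esub> k = \<zero>\<^bsub>quot_module M K\<^esub>"
      using submoduleE(1)[OF KS] a_rcos_eq_submodule_iff[OF KS] quot_module_zero by auto
    then show "k \<in> L" unfolding L_def using Q.submodule_zero_closed[OF LL] by simp
  qed
  obtain t I where t: "t \<in> S" and I: "ideal I R"
    and ann_L: "smult_set M t (ann M I) \<subseteq> L" and L_ann: "L \<subseteq> ann M I"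
    using M LS unfolding S_comultiplication_def by meson
  have IR: "I \<subseteq> carrier R" using ideal.Icarr[OF I] by blast
  have tR: "t \<in> carrier R" and wR: "w \<in> carrier R" and tw: "t \<otimes>\<^bsub>R\<^esub> w \<in> S"
    using S t w unfolding mcs_def by auto
  have "smult_set (quot_module M K) (t \<otimes>\<^bsub>R\<^esub> w) (ann (quot_module M K) I) \<subseteq> LL"
  proof
    fix Y assume "Y \<in> smult_set (quot_module M K) (t \<otimes>\<^bsub>R\<^esub> w) (ann (quot_module M K) I)"
    then obtain X where X: "X \<in> ann (quot_module M K) I"
      and Y: "Y = (t \<otimes>\<^bsub>R\<^esub> w) \<odot>\<^bsub>quot_module M K\<^esub> X"
      unfolding smult_set_def by auto
    then obtain x where x: "x \<in> carrier M" and Xx: "X = K +>\<^bsub>M\<^esub> x"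
      unfolding ann_def colon_def by (auto elim: quot_module_carrierE)
    have "x \<in> colon M K I" using ann_quot_module_iff[OF KS IR x] X Xx by blast
    then have "(t \<otimes>\<^bsub>R\<^esub> w) \<odot>\<^bsub>M\<^esub> x \<in> L"
      using smult_colon_in_submodule[OF LS KL I tR ann_L wR copure[OF I]] by blast
    then show "Y \<in> LL" using Y Xx quot_module_smult[OF KS _ x] tR wR unfolding L_def by simp
  qed
  moreover have "LL \<subseteq> ann (quot_module M K) I"
  proof
    fix X assume X: "X \<in> LL"
    then obtain x where x: "x \<in> carrier M" "X = K +>\<^bsub>M\<^esub> x"
      using Q.submoduleE(1)[OF LL] quot_module_carrierE by blast
    then have "x \<in> ann M I" using X L_ann unfolding L_def by auto
    then have "x \<in> colon M K I"
      using submodule_zero_closed[OF KS] unfolding ann_def colon_def by auto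
    then show "X \<in> ann (quot_module M K) I" using ann_quot_module_iff[OF KS IR] x by blast
  qed
  ultimately show "\<exists>s\<in>S. \<exists>I. ideal I R \<and> smult_set (quot_module M K) s (ann (quot_module M K) I) \<subseteq> LL
      \<and> LL \<subseteq> ann (quot_module M K) I"
    using tw I by blast
qed

end

theorem theorem3p4:
  fixes R :: "('a, 'd) ring_scheme" and M :: "('a, 'b, 'c) module_scheme"
  assumes "cring R" and "\<one>\<^bsub>R\<^esub> \<noteq> \<zero>\<^bsub>R\<^esub>"
    and "module R M"
    and "mcs R S"
    and "S_comultiplication R S M"
    and "S_copure R S M N"
    and "s \<in> S"
  shows "module R (quot_module M (smult_set M s N)) \<and>
         S_comultiplication R S (quot_module M (smult_set M s N))"
proof -
  interpret module R M by (rule assms(3))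
  have "S_copure R S M (smult_set M s N)"
    using S_copure_smult_set assms(4,6,7) .
  then show ?thesis
    using quot_module_is_module S_comultiplication_quot_module assms(4,5)
    unfolding S_copure_def by blast
qed

end
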